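(* In the synchronous crash-fault message-passing model described in the context, with at most $f\le p/2$ crashes in total, for every iteration $t$ and every node $i$ that has not crashed before computing its stochastic gradient at iteration $t$, $$\mathbb{E}\|\vec v_t^i-\vec x_t\|^2\le\frac{\alpha^2f^2M^2}{p^2}.$$
   Context: There are $p$ nodes $\mathcal P=\{1,\dots,p\}$, a learning rate $\alpha>0$, and all nodes start with $\vec v_0^i=\vec 0$; also $\vec x_0=\vec 0$. In iteration $s$ each alive node $j$ computes a stochastic gradient $\tilde G(\vec v_s^j)$ with $\mathbb{E}\|\tilde G(\vec v_s^j)\|^2\le M^2$ and broadcasts it. A node may crash (permanently) at some iteration, possibly after computing its gradient but before it reaches some receivers. $\mathcal L_s^i\subseteq\mathcal P$ denotes the set of nodes whose iteration-$s$ gradient is received by node $i$ (with $i\in\mathcal L_s^i$), and $I_s=\{j:\ j\in\mathcal L_s^{i'}\text{ for some node }i'\}$ is the set of nodes whose iteration-$s$ gradient reached at least one node. Node $i$ updates $\vec v_{s+1}^i=\vec v_s^i-\frac{\alpha}{p}\sum_{j\in\mathcal L_s^i}\tilde G(\vec v_s^j)$, and the global parameter is $\vec x_{s+1}=\vec x_s-\frac{\alpha}{p}\sum_{j\in I_s}\tilde G(\vec v_s^j)$. If $j\in I_s\setminus\mathcal L_s^i$ then $j$ crashed at iteration $s$; since each node crashes at most once and at most $f$ nodes crash, $\sum_{s}|I_s\setminus\mathcal L_s^i|\le f$ for every $i$. *)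

theory Defs
  imports "HOL-Probability.Probability"
begin

text \<open>Nodes are 1..p.  L s i w : set of nodes whose iteration-s gradient node i
receives (in outcome w).  G s j x w : stochastic gradient computed by node j at
iteration s at the point x (in outcome w); node j's gradient at iteration s is
G s j (v_s^j w) w.\<close>

definition I_set :: "nat \<Rightarrow> (nat \<Rightarrow> nat \<Rightarrow> 'w \<Rightarrow> nat set) \<Rightarrow> nat \<Rightarrow> 'w \<Rightarrow> nat set" where
  "I_set p L s w = (\<Union>i'\<in>{1..p}. L s i' w)"

primrec vloc :: "real \<Rightarrow> nat \<Rightarrow> (nat \<Rightarrow> nat \<Rightarrow> 'w \<Rightarrow> nat set)
    \<Rightarrow> (nat \<Rightarrow> nat \<Rightarrow> 'v::real_normed_vector \<Rightarrow> 'w \<Rightarrow> 'v) \<Rightarrow> nat \<Rightarrow> nat \<Rightarrow> 'w \<Rightarrow> 'v" where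
  "vloc \<alpha> p L G 0 i w = 0"
| "vloc \<alpha> p L G (Suc s) i w =
     vloc \<alpha> p L G s i w - (\<alpha> / real p) *\<^sub>R (\<Sum>j\<in>L s i w. G s j (vloc \<alpha> p L G s j w) w)"

primrec xglob :: "real \<Rightarrow> nat \<Rightarrow> (nat \<Rightarrow> nat \<Rightarrow> 'w \<Rightarrow> nat set)
    \<Rightarrow> (nat \<Rightarrow> nat \<Rightarrow> 'v::real_normed_vector \<Rightarrow> 'w \<Rightarrow> 'v) \<Rightarrow> nat \<Rightarrow> 'w \<Rightarrow> 'v" where
  "xglob \<alpha> p L G 0 w = 0"
| "xglob \<alpha> p L G (Suc s) w =
     xglob \<alpha> p L G s w - (\<alpha> / real p) *\<^sub>R (\<Sum>j\<in>I_set p L s w. G s j (vloc \<alpha> p L G s j w) w)"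

text \<open>crash j = Some c: node j crashes (permanently) at iteration c, possibly after
computing its iteration-c gradient; None: never crashes.\<close>

definition computes :: "(nat \<Rightarrow> nat option) \<Rightarrow> nat \<Rightarrow> nat \<Rightarrow> bool" where
  "computes crash j s = (case crash j of None \<Rightarrow> True | Some c \<Rightarrow> s \<le> c)"

definition alive_after :: "(nat \<Rightarrow> nat option) \<Rightarrow> nat \<Rightarrow> nat \<Rightarrow> bool" where
  "alive_after crash j s = (case crash j of None \<Rightarrow> True | Some c \<Rightarrow> s < c)"

end

theory Submission
  imports Defs
begin

text \<open>The local model of node i differs from the global one exactly by the gradients that
reached some node but not i. Such a gradient (s, j) can only be missed because j crashed at
iteration s, so at most f of them occur over the whole run; Cauchy-Schwarz over these at most
f terms, each of second moment at most M^2, gives the bound.\<close>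

lemma finite_I_set:
  assumes "\<And>i'. L s i' w \<subseteq> {1..p}"
  shows "finite (I_set p L s w)"
  using assms unfolding I_set_def by (meson UN_least finite_atLeastAtMost finite_subset)

lemma vloc_minus_xglob:
  fixes L :: "nat \<Rightarrow> nat \<Rightarrow> 'w \<Rightarrow> nat set"
    and G :: "nat \<Rightarrow> nat \<Rightarrow> 'v::real_normed_vector \<Rightarrow> 'w \<Rightarrow> 'v"
  assumes L_sub: "\<And>s i' w. L s i' w \<subseteq> {1..p}" and i: "i \<in> {1..p}"
  shows "vloc \<alpha> p L G t i w - xglob \<alpha> p L G t w
     = (\<alpha> / real p) *\<^sub>R (\<Sum>s<t. \<Sum>j\<in>I_set p L s w - L s i w. G s j (vloc \<alpha> p L G s j w) w)"
proof (induction t)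
  case 0
  then show ?case by simp
next
  case (Suc t)
  let ?g = "\<lambda>j. G t j (vloc \<alpha> p L G t j w) w"
  have "finite (I_set p L t w)"
    using L_sub by (rule finite_I_set)
  moreover have "L t i w \<subseteq> I_set p L t w"
    using i unfolding I_set_def by blast
  ultimately have "sum ?g (I_set p L t w) = sum ?g (L t i w) + (\<Sum>j\<in>I_set p L t w - L t i w. ?g j)"
    by (simp add: sum_diff)
  then show ?case
    using Suc by (simp add: algebra_simps)
qed

definition crash_events :: "(nat \<Rightarrow> nat option) \<Rightarrow> nat \<Rightarrow> nat \<Rightarrow> (nat \<times> nat) set" where
  "crash_events crash p t = {(s, j). s < t \<and> j \<in> {1..p} \<and> crash j = Some s}"

lemma finite_crash_events: "finite (crash_events crash p t)"
  by (rule finite_subset[of _ "{..<t} \<times> {1..p}"]) (auto simp: crash_events_def)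

lemma card_crash_events_le: "card (crash_events crash p t) \<le> card {j\<in>{1..p}. crash j \<noteq> None}"
proof (rule card_inj_on_le)
  show "inj_on snd (crash_events crash p t)"
    unfolding inj_on_def crash_events_def by auto
qed (auto simp: crash_events_def)

lemma missed_gradients_subset_crash_events:
  assumes L_sub: "\<And>s i' w. L s i' w \<subseteq> {j\<in>{1..p}. computes crash j s}"
    and L_reliable: "\<And>s i' j w. i' \<in> {1..p} \<Longrightarrow> alive_after crash i' s \<Longrightarrow>
        j \<in> {1..p} \<Longrightarrow> computes crash j s \<Longrightarrow> crash j \<noteq> Some s \<Longrightarrow> j \<in> L s i' w"
    and i: "i \<in> {1..p}" and "computes crash i t"
  shows "Sigma {..<t} (\<lambda>s. I_set p L s w - L s i w) \<subseteq> crash_events crash p t"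
proof safe
  fix s j
  assume s: "s < t" and j: "j \<in> I_set p L s w" and missed: "j \<notin> L s i w"
  from j obtain i' where "j \<in> L s i' w"
    unfolding I_set_def by auto
  then have j_node: "j \<in> {1..p}" "computes crash j s"
    using L_sub by auto
  have "alive_after crash i s"
    using \<open>computes crash i t\<close> s by (auto simp: computes_def alive_after_def split: option.splits)
  then have "crash j = Some s"
    using L_reliable[OF i _ j_node] missed by blast
  then show "(s, j) \<in> crash_events crash p t"
    using s j_node by (simp add: crash_events_def)
qed

lemma norm_sum_subset_squared_le:
  fixes g :: "'a \<Rightarrow> 'v::real_normed_vector"
  assumes "finite C" and "D \<subseteq> C"
  shows "(norm (\<Sum>x\<in>D. g x))\<^sup>2 \<le> real (card C) * (\<Sum>x\<in>C. (norm (g x))\<^sup>2)"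
proof -
  have "norm (\<Sum>x\<in>D. g x) \<le> (\<Sum>x\<in>D. norm (g x))"
    by (rule norm_sum)
  also have "\<dots> \<le> (\<Sum>x\<in>C. norm (g x))"
    using assms by (intro sum_mono2) auto
  finally have "(norm (\<Sum>x\<in>D. g x))\<^sup>2 \<le> (\<Sum>x\<in>C. norm (g x))\<^sup>2"
    by (simp add: power_mono)
  also have "\<dots> \<le> (\<Sum>x\<in>C. (norm (g x))\<^sup>2) * real (card C)"
    by (rule sum_squared_le_sum_of_squares)
  finally show ?thesis
    by (simp add: mult.commute)
qed

lemma vloc_minus_xglob_squared_le:
  fixes G :: "nat \<Rightarrow> nat \<Rightarrow> 'v::real_normed_vector \<Rightarrow> 'w \<Rightarrow> 'v"
  assumes L_sub: "\<And>s i' w. L s i' w \<subseteq> {j\<in>{1..p}. computes crash j s}"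
    and L_reliable: "\<And>s i' j w. i' \<in> {1..p} \<Longrightarrow> alive_after crash i' s \<Longrightarrow>
        j \<in> {1..p} \<Longrightarrow> computes crash j s \<Longrightarrow> crash j \<noteq> Some s \<Longrightarrow> j \<in> L s i' w"
    and i: "i \<in> {1..p}" and "computes crash i t"
  defines "C \<equiv> crash_events crash p t"
  shows "(norm (vloc \<alpha> p L G t i w - xglob \<alpha> p L G t w))\<^sup>2
     \<le> (\<alpha> / real p)\<^sup>2 * real (card C) * (\<Sum>(s, j)\<in>C. (norm (G s j (vloc \<alpha> p L G s j w) w))\<^sup>2)"
proof -
  let ?g = "\<lambda>(s, j). G s j (vloc \<alpha> p L G s j w) w"
  let ?D = "Sigma {..<t} (\<lambda>s. I_set p L s w - L s i w)"
  have L_sub': "\<And>s i' w. L s i' w \<subseteq> {1..p}"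
    using L_sub by blast
  have "\<And>s. finite (I_set p L s w - L s i w)"
    using finite_I_set[where L = L, OF L_sub'] by blast
  then have "vloc \<alpha> p L G t i w - xglob \<alpha> p L G t w = (\<alpha> / real p) *\<^sub>R sum ?g ?D"
    unfolding vloc_minus_xglob[OF L_sub' i] by (subst sum.Sigma) auto
  then have "(norm (vloc \<alpha> p L G t i w - xglob \<alpha> p L G t w))\<^sup>2
      = (\<alpha> / real p)\<^sup>2 * (norm (sum ?g ?D))\<^sup>2"
    by (simp add: power_mult_distrib power_divide power2_abs)
  also have "\<dots> \<le> (\<alpha> / real p)\<^sup>2 * (real (card C) * (\<Sum>x\<in>C. (norm (?g x))\<^sup>2))"
    using missed_gradients_subset_crash_events[where L = L and crash = crash and w = w,
        OF L_sub L_reliable i \<open>computes crash i t\<close>]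
    by (intro mult_left_mono norm_sum_subset_squared_le) (auto simp: C_def finite_crash_events)
  finally show ?thesis
    by (simp add: case_prod_unfold mult.assoc)
qed

lemma nn_integral_scaled_sum_le:
  fixes h :: "'a \<Rightarrow> 'w \<Rightarrow> real"
  assumes "finite C" and "0 \<le> c" and "0 \<le> B" and h_nonneg: "\<And>x w. 0 \<le> h x w"
    and h_meas: "\<And>x. x \<in> C \<Longrightarrow> (\<lambda>w. ennreal (h x w)) \<in> borel_measurable M"
    and h_bound: "\<And>x. x \<in> C \<Longrightarrow> (\<integral>\<^sup>+ w. ennreal (h x w) \<partial>M) \<le> ennreal B"
  shows "(\<integral>\<^sup>+ w. ennreal (c * (\<Sum>x\<in>C. h x w)) \<partial>M) \<le> ennreal (c * real (card C) * B)"
proof -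
  have "(\<integral>\<^sup>+ w. ennreal (c * (\<Sum>x\<in>C. h x w)) \<partial>M) = (\<integral>\<^sup>+ w. ennreal c * (\<Sum>x\<in>C. ennreal (h x w)) \<partial>M)"
    using \<open>0 \<le> c\<close> h_nonneg by (simp add: ennreal_mult sum_nonneg sum_ennreal)
  also have "\<dots> = ennreal c * (\<Sum>x\<in>C. \<integral>\<^sup>+ w. ennreal (h x w) \<partial>M)"
    using h_meas by (simp add: nn_integral_cmult borel_measurable_sum nn_integral_sum)
  also have "\<dots> \<le> ennreal c * (\<Sum>x\<in>C. ennreal B)"
    using h_bound by (intro mult_left_mono sum_mono) auto
  also have "\<dots> = ennreal (c * real (card C) * B)"
    using assms(2,3) by (simp add: ennreal_mult ennreal_of_nat_eq_real_of_nat mult.assoc)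
  finally show ?thesis .
qed

theorem mainTheorem8:
  fixes M :: "'w measure" and p f :: nat and \<alpha> Mg :: real
    and crash :: "nat \<Rightarrow> nat option"
    and L :: "nat \<Rightarrow> nat \<Rightarrow> 'w \<Rightarrow> nat set"
    and G :: "nat \<Rightarrow> nat \<Rightarrow> 'v::euclidean_space \<Rightarrow> 'w \<Rightarrow> 'v"
    and t i :: nat
  assumes "prob_space M"
    and "0 < p" and "\<alpha> > 0"
    and "real f \<le> real p / 2"
    and "card {j\<in>{1..p}. crash j \<noteq> None} \<le> f"
    and L_sub: "\<And>s i' w. L s i' w \<subseteq> {j\<in>{1..p}. computes crash j s}"
    and L_self: "\<And>s i' w. i' \<in> {1..p} \<Longrightarrow> computes crash i' s \<Longrightarrow> i' \<in> L s i' w"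
    and L_reliable: "\<And>s i' j w. i' \<in> {1..p} \<Longrightarrow> alive_after crash i' s \<Longrightarrow>
        j \<in> {1..p} \<Longrightarrow> computes crash j s \<Longrightarrow> crash j \<noteq> Some s \<Longrightarrow> j \<in> L s i' w"
    and G_meas: "\<And>s j. j \<in> {1..p} \<Longrightarrow>
        (\<lambda>w. G s j (vloc \<alpha> p L G s j w) w) \<in> borel_measurable M"
    and G_bound: "\<And>s j. j \<in> {1..p} \<Longrightarrow>
        (\<integral>\<^sup>+ w. ennreal ((norm (G s j (vloc \<alpha> p L G s j w) w))\<^sup>2) \<partial>M) \<le> ennreal (Mg\<^sup>2)"
    and "i \<in> {1..p}" and "computes crash i t"
  shows "(\<integral>\<^sup>+ w. ennreal ((norm (vloc \<alpha> p L G t i w - xglob \<alpha> p L G t w))\<^sup>2) \<partial>M)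
           \<le> ennreal (\<alpha>\<^sup>2 * (real f)\<^sup>2 * Mg\<^sup>2 / (real p)\<^sup>2)"
proof -
  define C where "C = crash_events crash p t"
  define c where "c = (\<alpha> / real p)\<^sup>2 * real (card C)"
  define h where "h = (\<lambda>(s, j) w. (norm (G s j (vloc \<alpha> p L G s j w) w))\<^sup>2)"
  have "(\<integral>\<^sup>+ w. ennreal ((norm (vloc \<alpha> p L G t i w - xglob \<alpha> p L G t w))\<^sup>2) \<partial>M)
      \<le> (\<integral>\<^sup>+ w. ennreal (c * (\<Sum>x\<in>C. h x w)) \<partial>M)"
    using vloc_minus_xglob_squared_le[where L = L and crash = crash, OF L_sub L_reliable assms(11,12)]
    unfolding c_def C_def h_def by (intro nn_integral_mono ennreal_leI) (simp add: case_prod_unfold)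
  also have "\<dots> \<le> ennreal (c * real (card C) * Mg\<^sup>2)"
    using finite_crash_events G_meas G_bound
    by (intro nn_integral_scaled_sum_le) (auto simp: c_def C_def h_def crash_events_def)
  also have "\<dots> \<le> ennreal (\<alpha>\<^sup>2 * (real f)\<^sup>2 * Mg\<^sup>2 / (real p)\<^sup>2)"
  proof (rule ennreal_leI)
    have "card C \<le> f"
      using card_crash_events_le assms(5) unfolding C_def by (rule le_trans)
    then have "(real (card C))\<^sup>2 * (\<alpha>\<^sup>2 * Mg\<^sup>2 / (real p)\<^sup>2) \<le> (real f)\<^sup>2 * (\<alpha>\<^sup>2 * Mg\<^sup>2 / (real p)\<^sup>2)"
      by (intro mult_right_mono power_mono) auto
    then show "c * real (card C) * Mg\<^sup>2 \<le> \<alpha>\<^sup>2 * (real f)\<^sup>2 * Mg\<^sup>2 / (real p)\<^sup>2"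
      by (simp add: c_def power_divide power2_eq_square mult_ac)
  qed
  finally show ?thesis .
qed

end
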